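(* Let $$A_n= \sum_{0\le j,k \le n}\binom{n}{j}^2\binom{n}{k}^2\binom{n+j}{n}\binom{n+k}{n}\binom{j+k}{n}\quad (n\ge 0),\qquad w_0(z)=\sum_{n=0}^{\infty} A_n z^n\in\mathbb{Z}[[z]].$$ Then for every integer $n\ge 1$ one has $v_2(A_n)\ge 2$. In particular $w_0(z)\equiv 1 \pmod 4$ (coefficientwise), and there exists a power series $u_0(z)\in\mathbb{Z}[[z]]$ such that $w_0(z)=u_0(z)^2$.
   Context: $v_2$ denotes the $2$-adic valuation on the integers, with $v_2(0)=+\infty$. Note $A_0=1$. *)

theory Defs
  imports "HOL-Computational_Algebra.Computational_Algebra" "HOL-Library.Extended_Nat"
begin

definition v2 :: "int \<Rightarrow> enat" where
  "v2 x = (if x = 0 then \<infinity> else enat (multiplicity (2::int) x))"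

definition A :: "nat \<Rightarrow> int" where
  "A n = (\<Sum>j\<le>n. \<Sum>k\<le>n.
      int ((n choose j)^2 * (n choose k)^2 * ((n + j) choose n) * ((n + k) choose n)
           * ((j + k) choose n)))"

definition w0 :: "int fps" where
  "w0 = Abs_fps A"

end

theory Submission
  imports Defs
begin

text \<open>Put b(n,j) = C(n,j)^2 C(n+j,n). From C(n,j) C(n+j,n) = C(n+j,2j) C(2j,j) and the evenness
  of the central binomial coefficients, b(n,j) is even for j \<ge> 1. In
  A(n) = \<Sum> b(n,j) b(n,k) C(j+k,n) every term with j, k \<ge> 1 is thus divisible by 4, and of the
  remaining terms only (0,n) and (n,0) are nonzero, together contributing 2 b(n,n); hence
  4 | A(n) for n \<ge> 1.
  An integer series whose constant term is 1 and whose other coefficients are divisible by 4 is a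
  square: the coefficients of a square root are forced by 2 u(n) = a(n) - \<Sum>{0<i<n} u(i) u(n-i),
  and inductively all u(i) with i \<ge> 1 are even, so the right-hand side is divisible by 4.\<close>

lemma even_central_binomial:
  assumes "0 < j"
  shows "even (2 * j choose j)"
proof -
  obtain m where j: "j = Suc m" using assms by (cases j) auto
  have "(Suc (2 * m) choose Suc m) = (Suc (2 * m) choose m)"
    using binomial_symmetric[of m "Suc (2 * m)"] by (simp add: Suc_diff_le)
  moreover have "(2 * j choose j) = (Suc (2 * m) choose m) + (Suc (2 * m) choose Suc m)"
    by (simp add: j)
  ultimately show ?thesis by simp
qed

lemma binomial_mult_binomial_central:
  "(n choose j) * (n + j choose n) = (n + j choose 2 * j) * (2 * j choose j)"
proof (cases "j \<le> n")
  case True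
  have "(n + j choose 2 * j) * (2 * j choose j) = (n + j choose j) * (n choose j)"
    using choose_mult[of j "2 * j" "n + j"] True by simp
  also have "(n + j choose j) = (n + j choose n)"
    using binomial_symmetric[of j "n + j"] by simp
  finally show ?thesis by simp
qed (simp add: binomial_eq_0)

definition A_weight :: "nat \<Rightarrow> nat \<Rightarrow> nat" where
  "A_weight n j = (n choose j)^2 * (n + j choose n)"

lemma even_A_weight:
  assumes "0 < j"
  shows "even (A_weight n j)"
proof -
  have "A_weight n j = (n choose j) * ((n + j choose 2 * j) * (2 * j choose j))"
    by (simp add: A_weight_def power2_eq_square binomial_mult_binomial_central[symmetric])
  with even_central_binomial[OF assms] show ?thesis by simp
qed

lemma A_eq_sum_A_weight:
  "A n = (\<Sum>j\<le>n. \<Sum>k\<le>n. int (A_weight n j * A_weight n k * (j + k choose n)))"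
  unfolding A_def A_weight_def by (simp add: algebra_simps)

lemma sum_atMost_square_split:
  fixes f :: "nat \<Rightarrow> nat \<Rightarrow> 'a :: comm_monoid_add"
  shows "(\<Sum>j\<le>n. \<Sum>k\<le>n. f j k) =
    f 0 0 + (\<Sum>k\<in>{1..n}. f 0 k) + (\<Sum>j\<in>{1..n}. f j 0) + (\<Sum>j\<in>{1..n}. \<Sum>k\<in>{1..n}. f j k)"
proof -
  have "{..n} = insert 0 {1..n}" by auto
  then show ?thesis by (simp add: sum.distrib ac_simps)
qed

lemma four_dvd_A:
  assumes "0 < n"
  shows "4 dvd A n"
proof -
  define f where "f j k = int (A_weight n j * A_weight n k * (j + k choose n))" for j k
  have weight_0: "A_weight n 0 = 1" by (simp add: A_weight_def)
  have boundary: "(\<Sum>k\<in>{1..n}. f 0 k) = int (A_weight n n)" "(\<Sum>j\<in>{1..n}. f j 0) = int (A_weight n n)"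
  proof -
    have "(\<Sum>k\<in>{1..n}. f 0 k) = (\<Sum>k\<in>{1..n}. if k = n then int (A_weight n n) else 0)"
      by (intro sum.cong) (auto simp: f_def weight_0 binomial_eq_0)
    moreover have "(\<Sum>j\<in>{1..n}. f j 0) = (\<Sum>j\<in>{1..n}. if j = n then int (A_weight n n) else 0)"
      by (intro sum.cong) (auto simp: f_def weight_0 binomial_eq_0)
    ultimately show "(\<Sum>k\<in>{1..n}. f 0 k) = int (A_weight n n)" "(\<Sum>j\<in>{1..n}. f j 0) = int (A_weight n n)"
      using assms by simp_all
  qed
  have "A n = (\<Sum>j\<le>n. \<Sum>k\<le>n. f j k)"
    unfolding A_eq_sum_A_weight f_def ..
  also have "\<dots> = f 0 0 + (\<Sum>k\<in>{1..n}. f 0 k) + (\<Sum>j\<in>{1..n}. f j 0)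
                    + (\<Sum>j\<in>{1..n}. \<Sum>k\<in>{1..n}. f j k)"
    by (rule sum_atMost_square_split)
  also have "f 0 0 = 0"
    using assms by (simp add: f_def)
  finally have "A n = 2 * int (A_weight n n) + (\<Sum>j\<in>{1..n}. \<Sum>k\<in>{1..n}. f j k)"
    unfolding boundary by linarith
  moreover have "4 dvd (\<Sum>j\<in>{1..n}. \<Sum>k\<in>{1..n}. f j k)"
  proof (intro dvd_sum)
    fix j k assume "j \<in> {1..n}" "k \<in> {1..n}"
    then have "even (A_weight n j)" "even (A_weight n k)"
      using even_A_weight by simp_all
    then obtain a b where "A_weight n j = 2 * a" "A_weight n k = 2 * b"
      by (auto elim!: evenE)
    then show "4 dvd f j k" by (simp add: f_def algebra_simps)
  qed
  moreover obtain c where "A_weight n n = 2 * c"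
    using even_A_weight assms by blast
  ultimately show ?thesis by simp
qed

lemma v2_ge_if_pow_dvd:
  assumes "(2::int) ^ k dvd x"
  shows "enat k \<le> v2 x"
  using assms multiplicity_geI[of x "2::int" k] by (simp add: v2_def)

fun fps_sqrt_coeff :: "int fps \<Rightarrow> nat \<Rightarrow> int" where
  "fps_sqrt_coeff f n = (if n = 0 then 1 else
     (f $ n - (\<Sum>i\<in>{1..<n}. fps_sqrt_coeff f i * fps_sqrt_coeff f (n - i))) div 2)"

declare fps_sqrt_coeff.simps [simp del]

context
  fixes f :: "int fps"
  assumes four_dvd_coeff: "\<And>n. 0 < n \<Longrightarrow> 4 dvd f $ n"
begin

lemma four_dvd_sqrt_residual:
  assumes "0 < n" and "\<And>i. 0 < i \<Longrightarrow> i < n \<Longrightarrow> even (fps_sqrt_coeff f i)"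
  shows "4 dvd f $ n - (\<Sum>i\<in>{1..<n}. fps_sqrt_coeff f i * fps_sqrt_coeff f (n - i))"
proof -
  have "4 dvd (\<Sum>i\<in>{1..<n}. fps_sqrt_coeff f i * fps_sqrt_coeff f (n - i))"
  proof (rule dvd_sum)
    fix i assume "i \<in> {1..<n}"
    then have "even (fps_sqrt_coeff f i)" "even (fps_sqrt_coeff f (n - i))"
      using assms(2) by auto
    then obtain a b where "fps_sqrt_coeff f i = 2 * a" "fps_sqrt_coeff f (n - i) = 2 * b"
      by (auto elim!: evenE)
    then show "4 dvd fps_sqrt_coeff f i * fps_sqrt_coeff f (n - i)" by simp
  qed
  with four_dvd_coeff[OF assms(1)] show ?thesis by simp
qed

lemma even_fps_sqrt_coeff: "0 < n \<Longrightarrow> even (fps_sqrt_coeff f n)"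
proof (induction n rule: less_induct)
  case (less n)
  then obtain c where "f $ n - (\<Sum>i\<in>{1..<n}. fps_sqrt_coeff f i * fps_sqrt_coeff f (n - i)) = 4 * c"
    using four_dvd_sqrt_residual by blast
  with less.prems have "fps_sqrt_coeff f n = 2 * c"
    by (subst fps_sqrt_coeff.simps) simp
  then show ?case by simp
qed

lemma fps_sqrt_coeff_rec:
  assumes "0 < n"
  shows "2 * fps_sqrt_coeff f n = f $ n - (\<Sum>i\<in>{1..<n}. fps_sqrt_coeff f i * fps_sqrt_coeff f (n - i))"
proof -
  from four_dvd_sqrt_residual[OF assms even_fps_sqrt_coeff] obtain c
    where "f $ n - (\<Sum>i\<in>{1..<n}. fps_sqrt_coeff f i * fps_sqrt_coeff f (n - i)) = 4 * c" by blast
  with assms show ?thesis by (subst fps_sqrt_coeff.simps) simp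
qed

lemma fps_sqrt_coeff_square:
  assumes "f $ 0 = 1"
  shows "f = Abs_fps (fps_sqrt_coeff f) ^ 2"
proof (rule fps_ext)
  fix n
  let ?u = "fps_sqrt_coeff f"
  have u0: "?u 0 = 1" by (simp add: fps_sqrt_coeff.simps)
  show "f $ n = (Abs_fps ?u ^ 2) $ n"
  proof (cases "n = 0")
    case True
    with assms u0 show ?thesis by (simp add: power2_eq_square)
  next
    case False
    have "{0..n} = insert 0 (insert n {1..<n})" using False by auto
    then have "(Abs_fps ?u ^ 2) $ n = ?u 0 * ?u n + (\<Sum>i\<in>{1..<n}. ?u i * ?u (n - i)) + ?u n * ?u 0"
      using False by (simp add: power2_eq_square fps_mult_nth ac_simps)
    also have "\<dots> = f $ n"
      using fps_sqrt_coeff_rec[of n] False u0 by simp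
    finally show ?thesis by simp
  qed
qed

end

theorem mainTheorem2:
  shows "(\<forall>n::nat. n \<ge> 1 \<longrightarrow> v2 (A n) \<ge> 2)
       \<and> (\<forall>n::nat. fps_nth w0 n mod 4 = fps_nth (1::int fps) n mod 4)
       \<and> (\<exists>u0 :: int fps. w0 = u0 ^ 2)"
proof (intro conjI allI impI)
  have w0_coeff: "0 < n \<Longrightarrow> 4 dvd w0 $ n" for n
    by (simp add: w0_def four_dvd_A)
  have w0_0: "w0 $ 0 = 1"
    by (simp add: w0_def A_def)
  fix n :: nat
  show "n \<ge> 1 \<Longrightarrow> v2 (A n) \<ge> 2"
    using v2_ge_if_pow_dvd[of 2 "A n"] four_dvd_A[of n] by (simp add: numeral_eq_enat)
  show "w0 $ n mod 4 = (1::int fps) $ n mod 4"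
    using w0_0 w0_coeff[of n] by (cases "n = 0") auto
  show "\<exists>u0. w0 = u0 ^ 2"
    using fps_sqrt_coeff_square[OF w0_coeff w0_0] by blast
qed

end
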